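(* Assume $F(x,v,u)=F_0(x,v)+F_1(x,v)u$ with $F_0:\mathbb{R}^n\times\mathbb{R}^n\to\mathbb{R}^n$ and $F_1:\mathbb{R}^n\times\mathbb{R}^n\to\mathbb{R}^{n\times m}$ globally Lipschitz continuous and continuously differentiable, and $\phi\in C([-\tau,0];\mathbb{R}^n)$. Let $u\in L^\infty(I;\mathbb{R}^m)$. Then there exists a unique solution $x\in C(I_\tau;\mathbb{R}^n)\cap W^{1,\infty}(I;\mathbb{R}^n)$ of \[ x'(t)=F\Big(x(t),\max_{s\in[t-\tau,t]}x(s),u(t)\Big)\ \text{ for a.e. } t\in(0,T),\qquad x(t)=\phi(t)\ \text{ for } t\in[-\tau,0]. \] Moreover, the mapping $u\mapsto x$ maps bounded sets in $L^\infty(I;\mathbb{R}^m)$ to bounded sets in $W^{1,\infty}(I;\mathbb{R}^n)$.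
   Context: $n,m\ge1$, $T>0$, $\tau>0$, $I=[0,T]$, $I_\tau=[-\tau,T]$; the maximum over $s$ is taken componentwise. *)

theory Defs
  imports "HOL-Analysis.Analysis"
begin

definition C1_map :: "('a::real_normed_vector \<Rightarrow> 'b::real_normed_vector) \<Rightarrow> bool" where
  "C1_map f \<longleftrightarrow> (\<exists>D. (\<forall>z. (f has_derivative blinfun_apply (D z)) (at z)) \<and> continuous_on UNIV D)"

definition Linf :: "real \<Rightarrow> (real \<Rightarrow> 'a::euclidean_space) \<Rightarrow> bool" where
  "Linf T u \<longleftrightarrow> u \<in> borel_measurable (lebesgue_on {0..T}) \<and>
     (\<exists>B. AE t in lebesgue_on {0..T}. norm (u t) \<le> B)"

text \<open>x in W^{1,infinity}(0,T;R^n): x(t) = x(0) + int_0^t g with g in L-infinity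
  (the weak derivative).\<close>
definition W1inf :: "real \<Rightarrow> (real \<Rightarrow> 'a::euclidean_space) \<Rightarrow> bool" where
  "W1inf T x \<longleftrightarrow> Linf T x \<and>
     (\<exists>g. Linf T g \<and> (\<forall>t\<in>{0..T}. x t = x 0 + integral {0..t} g))"

definition W1inf_bounded_by :: "real \<Rightarrow> (real \<Rightarrow> 'a::euclidean_space) \<Rightarrow> real \<Rightarrow> bool" where
  "W1inf_bounded_by T x C \<longleftrightarrow>
     (AE t in lebesgue_on {0..T}. norm (x t) \<le> C) \<and>
     (\<exists>g. g \<in> borel_measurable (lebesgue_on {0..T}) \<and>
          (\<forall>t\<in>{0..T}. x t = x 0 + integral {0..t} g) \<and>
          (AE t in lebesgue_on {0..T}. norm (g t) \<le> C))"

text \<open>Componentwise maximum of x over [t - tau, t] (a maximum for continuous x).\<close>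
definition delay_max :: "real \<Rightarrow> (real \<Rightarrow> real^'n) \<Rightarrow> real \<Rightarrow> real^'n" where
  "delay_max \<tau> x t = (\<chi> i. SUP s\<in>{t-\<tau>..t}. x s $ i)"

definition is_solution ::
  "real \<Rightarrow> real \<Rightarrow> (real^'n \<Rightarrow> real^'n \<Rightarrow> real^'n) \<Rightarrow> (real^'n \<Rightarrow> real^'n \<Rightarrow> real^'m^'n)
   \<Rightarrow> (real \<Rightarrow> real^'n) \<Rightarrow> (real \<Rightarrow> real^'m) \<Rightarrow> (real \<Rightarrow> real^'n) \<Rightarrow> bool" where
  "is_solution T \<tau> F0 F1 \<phi> u x \<longleftrightarrow>
     continuous_on {-\<tau>..T} x \<and> W1inf T x \<and>
     (AE t in lebesgue_on {0<..<T}.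
        (x has_vector_derivative
           (F0 (x t) (delay_max \<tau> x t) + F1 (x t) (delay_max \<tau> x t) *v u t)) (at t)) \<and>
     (\<forall>t\<in>{-\<tau>..0}. x t = \<phi> t)"

end

theory Submission
  imports Defs
begin

text \<open>
  Since each component of the delay maximum over [t - tau, t] is 1-Lipschitz with respect to
  the sup norm of the history, the right-hand side depends Lipschitz-continuously, with some
  constant L determined by ess sup |u|, on the restriction of x to [t - tau, t].  Written as the
  integral equation x = P x, where P x = phi on [-tau, 0] and P x t = phi 0 + int_0^t (rhs x)
  for t > 0, the Picard operator P contracts by 1/2 in the Bielecki norm
  sup |x s| exp (-(2 L + 1) max 0 s).  Banach's fixed point theorem gives existence, the same
  estimate uniqueness, and comparing x with P 0 bounds |x| and then |x'| in terms of
  ess sup |u| alone.  Solutions in the sense of the theorem are exactly the continuous solutions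
  of the integral equation, by Lebesgue's differentiation theorem.
\<close>

lemma norm_matrix_vector_mult_le:
  fixes A :: "real^'m^'n"
  shows "norm (A *v x) \<le> norm A * norm x"
proof -
  have row: "(A *v x) $ i = A $ i \<bullet> x" for i
    by (simp add: matrix_vector_mult_def inner_vec_def mult.commute)
  have "norm (A *v x) = L2_set (\<lambda>i. \<bar>A $ i \<bullet> x\<bar>) UNIV"
    by (simp add: norm_vec_def row)
  also have "\<dots> \<le> L2_set (\<lambda>i. norm (A $ i) * norm x) UNIV"
    by (intro L2_set_mono) (auto simp: Cauchy_Schwarz_ineq2)
  also have "\<dots> = norm A * norm x"
    by (simp add: L2_set_left_distrib norm_vec_def)
  finally show ?thesis .
qed

lemma lipschitz_on_pairD:
  assumes "L-lipschitz_on UNIV (\<lambda>(x, v). F x v)"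
  shows "dist (F x v) (F x' v') \<le> L * (dist x x' + dist v v')"
proof -
  have "dist (F x v) (F x' v') \<le> L * dist (x, v) (x', v')"
    using assms unfolding lipschitz_on_def by (metis UNIV_I case_prod_conv)
  also have "\<dots> \<le> L * (dist x x' + dist v v')"
    using assms by (intro mult_left_mono)
      (simp_all add: dist_Pair_Pair sqrt_sum_squares_le_sum lipschitz_on_nonneg)
  finally show ?thesis .
qed

lemma sets_lebesgue_Icc: "{a..b::real} \<in> sets lebesgue"
  and sets_lebesgue_Ioo: "{a<..<b::real} \<in> sets lebesgue"
  by simp_all

lemma AE_lebesgue_on_negligibleE:
  assumes "AE x in lebesgue_on S. P x" "S \<in> sets lebesgue"
  obtains N where "negligible N" "\<And>x. x \<in> S \<Longrightarrow> x \<notin> N \<Longrightarrow> P x"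
proof -
  obtain N where N: "{x \<in> space (lebesgue_on S). \<not> P x} \<subseteq> N" "N \<in> null_sets (lebesgue_on S)"
    using assms(1) unfolding eventually_ae_filter by blast
  then have "negligible N"
    using null_sets_restrict_space[OF assms(2)] by (simp add: negligible_iff_null_sets)
  with N(1) show ?thesis
    using that by (auto simp: space_restrict_space)
qed

lemma AE_lebesgue_on_negligibleI:
  assumes "negligible N" "S \<in> sets lebesgue" "\<And>x. x \<in> S \<Longrightarrow> x \<notin> N \<Longrightarrow> P x"
  shows "AE x in lebesgue_on S. P x"
proof (rule AE_I')
  have "N \<inter> S \<in> null_sets lebesgue"
    using assms(1,2) by (intro null_set_Int2) (simp_all add: negligible_iff_null_sets)
  then show "N \<inter> S \<in> null_sets (lebesgue_on S)"
    using null_sets_restrict_space[OF assms(2)] by blast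
  show "{x \<in> space (lebesgue_on S). \<not> P x} \<subseteq> N \<inter> S"
    using assms(3) by auto
qed

lemma integral_right_quotient_ae:
  fixes f :: "real \<Rightarrow> 'b::euclidean_space"
  assumes "\<And>a b. f integrable_on cbox a b"
  obtains N where "negligible N"
    "\<And>x e. x \<notin> N \<Longrightarrow> 0 < e \<Longrightarrow>
       \<exists>d>0. \<forall>h. 0 < h \<and> h < d \<longrightarrow> norm (integral {x..x+h} f /\<^sub>R h - f x) < e"
proof -
  obtain N where "negligible N" and H: "\<And>x e. x \<notin> N \<Longrightarrow> 0 < e \<Longrightarrow>
      \<exists>d>0. \<forall>h. 0 < h \<and> h < d \<longrightarrow> norm (integral (cbox x (x + h *\<^sub>R One)) f /\<^sub>R h ^ DIM(real) - f x) < e"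
    using integrable_ccontinuous_explicit[OF assms] by blast
  then show ?thesis
    using that by (simp add: cbox_interval)
qed

lemma integral_left_quotient_ae:
  fixes f :: "real \<Rightarrow> 'b::euclidean_space"
  assumes "\<And>a b. f integrable_on cbox a b"
  obtains N where "negligible N"
    "\<And>x e. x \<notin> N \<Longrightarrow> 0 < e \<Longrightarrow>
       \<exists>d>0. \<forall>h. 0 < h \<and> h < d \<longrightarrow> norm (integral {x-h..x} f /\<^sub>R h - f x) < e"
proof -
  have "(\<lambda>y. f (-y)) integrable_on cbox a b" for a b
    using assms[of "-b" "-a"] Henstock_Kurzweil_Integration.integrable_reflect_real[where f=f and a="-b" and b="-a"] by (simp add: cbox_interval)
  then obtain N where N: "negligible N" and H: "\<And>x e. x \<notin> N \<Longrightarrow> 0 < e \<Longrightarrow>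
      \<exists>d>0. \<forall>h. 0 < h \<and> h < d \<longrightarrow> norm (integral {x..x+h} (\<lambda>y. f (-y)) /\<^sub>R h - f (-x)) < e"
    by (rule integral_right_quotient_ae[where f="\<lambda>y. f (- y)"]) auto
  have "negligible (uminus ` N)"
    by (rule negligible_differentiable_image_negligible[OF _ N]) (auto intro: derivative_intros)
  moreover have "\<exists>d>0. \<forall>h. 0 < h \<and> h < d \<longrightarrow> norm (integral {x-h..x} f /\<^sub>R h - f x) < e"
    if "x \<notin> uminus ` N" "0 < e" for x e
  proof -
    have "-x \<notin> N" using that(1) by (metis image_eqI minus_minus)
    moreover have "integral {-x..-x+h} (\<lambda>y. f (-y)) = integral {x-h..x} f" for h
      using Henstock_Kurzweil_Integration.integral_reflect_real[where f=f and a="x-h" and b=x] by simp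
    ultimately show ?thesis using H[of "-x" e] that(2) by simp
  qed
  ultimately show ?thesis using that by blast
qed

lemma indefinite_integral_has_vector_derivative_at:
  fixes f :: "real \<Rightarrow> 'b::euclidean_space"
  assumes int: "\<And>a b. f integrable_on cbox a b" and x: "a < x"
    and right: "\<And>e. 0 < e \<Longrightarrow> \<exists>d>0. \<forall>h. 0 < h \<and> h < d \<longrightarrow> norm (integral {x..x+h} f /\<^sub>R h - f x) < e"
    and left: "\<And>e. 0 < e \<Longrightarrow> \<exists>d>0. \<forall>h. 0 < h \<and> h < d \<longrightarrow> norm (integral {x-h..x} f /\<^sub>R h - f x) < e"
  shows "((\<lambda>t. integral {a..t} f) has_vector_derivative f x) (at x)"
proof -
  define I where "I t = integral {a..t} f" for t
  have I_diff: "I y - I x = (if x \<le> y then integral {x..y} f else - integral {y..x} f)" if "a \<le> y" for y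
    using Henstock_Kurzweil_Integration.integral_combine[where a=a and c=x and b=y and f=f]
      Henstock_Kurzweil_Integration.integral_combine[where a=a and c=y and b=x and f=f] int x that
    by (auto simp: I_def cbox_interval algebra_simps)
  have "((\<lambda>y. (I y - I x - (y - x) *\<^sub>R f x) /\<^sub>R norm (y - x)) \<longlongrightarrow> 0) (at x)"
  proof (rule tendstoI)
    fix e :: real assume e: "0 < e"
    obtain d1 where d1: "d1 > 0" "\<forall>h. 0 < h \<and> h < d1 \<longrightarrow> norm (integral {x..x+h} f /\<^sub>R h - f x) < e"
      using right[OF e] by blast
    obtain d2 where d2: "d2 > 0" "\<forall>h. 0 < h \<and> h < d2 \<longrightarrow> norm (integral {x-h..x} f /\<^sub>R h - f x) < e"
      using left[OF e] by blast
    show "\<forall>\<^sub>F y in at x. dist ((I y - I x - (y - x) *\<^sub>R f x) /\<^sub>R norm (y - x)) 0 < e"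
      unfolding eventually_at
    proof (intro exI conjI ballI impI)
      show "0 < min (x - a) (min d1 d2)" using d1 d2 x by simp
      fix y assume y: "y \<noteq> x \<and> dist y x < min (x - a) (min d1 d2)"
      show "dist ((I y - I x - (y - x) *\<^sub>R f x) /\<^sub>R norm (y - x)) 0 < e"
      proof (cases "x < y")
        case True
        then have "(I y - I x - (y - x) *\<^sub>R f x) /\<^sub>R norm (y - x)
            = integral {x..x+(y-x)} f /\<^sub>R (y - x) - f x"
          using I_diff[of y] x by (simp add: scaleR_diff_right)
        then show ?thesis using d1(2)[rule_format, of "y - x"] y True by (simp add: dist_real_def)
      next
        case False
        then have yx: "y < x" using y by auto
        have "I y - I x - (y - x) *\<^sub>R f x = - (integral {y..x} f - (x - y) *\<^sub>R f x)"
          using I_diff[of y] y yx by (simp add: algebra_simps dist_real_def)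
        then have "(I y - I x - (y - x) *\<^sub>R f x) /\<^sub>R norm (y - x)
            = - (integral {x-(x-y)..x} f /\<^sub>R (x - y) - f x)"
          using yx by (simp add: scaleR_diff_right)
        then show ?thesis using d2(2)[rule_format, of "x - y"] y yx
          by (simp add: dist_real_def norm_minus_commute)
      qed
    qed
  qed
  then show ?thesis
    unfolding has_vector_derivative_def has_derivative_at_within I_def
    by (simp add: bounded_linear_scaleR_left)
qed

lemma has_vector_derivative_indefinite_integral_ae:
  fixes f :: "real \<Rightarrow> 'b::euclidean_space"
  assumes "\<And>a b. f integrable_on cbox a b"
  obtains N where "negligible N"
    "\<And>x. x \<notin> N \<Longrightarrow> a < x \<Longrightarrow> ((\<lambda>t. integral {a..t} f) has_vector_derivative f x) (at x)"
proof -
  obtain N1 where N1: "negligible N1" and right: "\<And>x e. x \<notin> N1 \<Longrightarrow> 0 < e \<Longrightarrow>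
      \<exists>d>0. \<forall>h. 0 < h \<and> h < d \<longrightarrow> norm (integral {x..x+h} f /\<^sub>R h - f x) < e"
    using integral_right_quotient_ae[OF assms] by blast
  obtain N2 where N2: "negligible N2" and left: "\<And>x e. x \<notin> N2 \<Longrightarrow> 0 < e \<Longrightarrow>
      \<exists>d>0. \<forall>h. 0 < h \<and> h < d \<longrightarrow> norm (integral {x-h..x} f /\<^sub>R h - f x) < e"
    using integral_left_quotient_ae[OF assms] by blast
  show ?thesis
  proof (rule that[of "N1 \<union> N2"])
    show "negligible (N1 \<union> N2)"
      using N1 N2 by simp
    show "((\<lambda>t. integral {a..t} f) has_vector_derivative f x) (at x)" if "x \<notin> N1 \<union> N2" "a < x" for x
      using that right[of x] left[of x]
      by (intro indefinite_integral_has_vector_derivative_at[OF assms that(2)]) auto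
  qed
qed

definition truncation :: "real \<Rightarrow> real \<Rightarrow> (real \<Rightarrow> 'a::euclidean_space) \<Rightarrow> real \<Rightarrow> 'a" where
  "truncation T B g t = (if t \<in> {0..T} \<and> norm (g t) \<le> B then g t else 0)"

lemma norm_truncation_le: "norm (truncation T B g t) \<le> max 0 B"
  by (auto simp: truncation_def)

lemma truncation_measurable:
  assumes "g \<in> borel_measurable (lebesgue_on {0..T})"
  shows "truncation T B g \<in> borel_measurable lebesgue"
proof -
  have "(\<lambda>t. if norm (g t) \<le> B then g t else 0) \<in> borel_measurable (lebesgue_on {0..T})"
    using assms by measurable
  then have "(\<lambda>t. if t \<in> {0..T} then if norm (g t) \<le> B then g t else 0 else 0) \<in> borel_measurable lebesgue"
    by (rule borel_measurable_if_I) simp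
  moreover have "truncation T B g = (\<lambda>t. if t \<in> {0..T} then if norm (g t) \<le> B then g t else 0 else 0)"
    by (auto simp: truncation_def fun_eq_iff)
  ultimately show ?thesis
    by simp
qed

lemma bounded_measurable_integrable_on:
  fixes g :: "real \<Rightarrow> 'b::euclidean_space"
  assumes "g \<in> borel_measurable (lebesgue_on {a..b})" "\<And>t. t \<in> {a..b} \<Longrightarrow> norm (g t) \<le> B"
  shows "g integrable_on {a..b}"
  using measurable_bounded_by_integrable_imp_integrable[OF assms(1) integrable_const_ivl[of B a b]] assms(2)
  by simp

lemma truncation_integrable_on:
  assumes "g \<in> borel_measurable (lebesgue_on {0..T})"
  shows "truncation T B g integrable_on cbox a b"
  unfolding cbox_interval
  using truncation_measurable[OF assms] norm_truncation_le
  by (intro bounded_measurable_integrable_on measurable_restrict_space1)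

lemma truncation_ae_eq:
  assumes "AE t in lebesgue_on {0..T}. norm (g t) \<le> B"
  obtains N where "negligible N" "\<And>t. t \<in> {0..T} \<Longrightarrow> t \<notin> N \<Longrightarrow> truncation T B g t = g t"
proof -
  obtain N where "negligible N" "\<And>t. t \<in> {0..T} \<Longrightarrow> t \<notin> N \<Longrightarrow> norm (g t) \<le> B"
    using AE_lebesgue_on_negligibleE[OF assms sets_lebesgue_Icc] by blast
  then show ?thesis
    by (intro that[of N]) (auto simp: truncation_def)
qed

lemma LinfI:
  assumes "g \<in> borel_measurable (lebesgue_on {0..T})" "\<And>t. t \<in> {0..T} \<Longrightarrow> norm (g t) \<le> B"
  shows "Linf T g"
  unfolding Linf_def using assms by (intro conjI exI[of _ B] AE_I2) (auto simp: space_restrict_space)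

lemma continuous_on_interval_norm_bound:
  fixes x :: "real \<Rightarrow> 'a::real_normed_vector"
  assumes "continuous_on {a..b} x"
  obtains B where "\<And>t. t \<in> {a..b} \<Longrightarrow> norm (x t) \<le> B"
  using compact_imp_bounded[OF compact_continuous_image[OF assms compact_Icc]]
  unfolding bounded_iff by (meson image_eqI)

lemma continuous_on_imp_Linf:
  assumes "continuous_on {0..T} x"
  shows "Linf T x"
proof -
  obtain B where "\<And>t. t \<in> {0..T} \<Longrightarrow> norm (x t) \<le> B"
    using continuous_on_interval_norm_bound[OF assms] by blast
  with assms show ?thesis
    by (intro LinfI continuous_imp_measurable_on_sets_lebesgue) auto
qed

lemma integral_representation_has_vector_derivative_ae:
  fixes x g :: "real \<Rightarrow> 'a::euclidean_space"
  assumes g: "Linf T g" and x: "\<And>t. t \<in> {0..T} \<Longrightarrow> x t = x 0 + integral {0..t} g"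
  obtains N where "negligible N" "\<And>t. t \<in> {0<..<T} \<Longrightarrow> t \<notin> N \<Longrightarrow> (x has_vector_derivative g t) (at t)"
proof -
  obtain B where gm: "g \<in> borel_measurable (lebesgue_on {0..T})"
    and gB: "AE t in lebesgue_on {0..T}. norm (g t) \<le> B"
    using g unfolding Linf_def by blast
  define h where "h = truncation T B g"
  obtain N1 where N1: "negligible N1" and h_eq: "\<And>t. t \<in> {0..T} \<Longrightarrow> t \<notin> N1 \<Longrightarrow> h t = g t"
    using truncation_ae_eq[OF gB] unfolding h_def by blast
  obtain N2 where N2: "negligible N2"
    and h_deriv: "\<And>t. t \<notin> N2 \<Longrightarrow> 0 < t \<Longrightarrow> ((\<lambda>s. integral {0..s} h) has_vector_derivative h t) (at t)"
    using has_vector_derivative_indefinite_integral_ae[OF truncation_integrable_on[OF gm], where a=0]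
    unfolding h_def by blast
  have x_h: "x t = x 0 + integral {0..t} h" if "t \<in> {0..T}" for t
  proof -
    have "integral {0..t} h = integral {0..t} g"
      by (rule integral_spike[OF N1]) (use that h_eq in auto)
    then show ?thesis using x[OF that] by simp
  qed
  have "(x has_vector_derivative g t) (at t)" if t: "t \<in> {0<..<T}" "t \<notin> N1 \<union> N2" for t
  proof -
    have "((\<lambda>s. x 0 + integral {0..s} h) has_vector_derivative h t) (at t)"
      using has_vector_derivative_add[OF has_vector_derivative_const h_deriv[of t]] t by simp
    then have "(x has_vector_derivative h t) (at t)"
    proof (rule has_vector_derivative_transform_within_open[where S="{0<..<T}"])
      show "x 0 + integral {0..s} h = x s" if "s \<in> {0<..<T}" for s
        using x_h[of s] that by simp
    qed (use t in auto)
    then show ?thesis using h_eq[of t] t by simp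
  qed
  with N1 N2 show ?thesis by (metis negligible_Un that)
qed

lemma continuous_on_weighted_norm_max:
  fixes Z :: "real \<Rightarrow> 'a::real_normed_vector"
  assumes "compact S" "S \<noteq> {}" "continuous_on S Z" "continuous_on S w" "\<And>s. s \<in> S \<Longrightarrow> 0 < w s"
  obtains D where "\<And>s. s \<in> S \<Longrightarrow> norm (Z s) \<le> D * w s" "\<exists>s0\<in>S. norm (Z s0) = D * w s0"
proof -
  have cont: "continuous_on S (\<lambda>s. norm (Z s) / w s)"
    using assms(3,4) assms(5)[THEN less_imp_neq] by (intro continuous_intros) auto
  obtain s0 where s0: "s0 \<in> S" and max: "\<And>s. s \<in> S \<Longrightarrow> norm (Z s) / w s \<le> norm (Z s0) / w s0"
    using continuous_attains_sup[OF assms(1,2) cont] by blast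
  show ?thesis
  proof (rule that)
    show "norm (Z s) \<le> norm (Z s0) / w s0 * w s" if "s \<in> S" for s
      using max[OF that] assms(5)[OF that] by (simp add: divide_le_eq)
    show "\<exists>s\<in>S. norm (Z s) = norm (Z s0) / w s0 * w s"
      using s0 assms(5)[OF s0] by (intro bexI[of _ s0]) auto
  qed
qed

lemma bdd_above_component_image:
  fixes X :: "real \<Rightarrow> real^'n"
  assumes "continuous_on {a..b} X"
  shows "bdd_above ((\<lambda>s. X s $ i) ` {a..b})"
proof -
  have "continuous_on {a..b} (\<lambda>s. X s $ i)"
    using assms by (intro continuous_intros)
  then show ?thesis
    by (intro bounded_imp_bdd_above compact_imp_bounded compact_continuous_image) auto
qed

lemma SUP_component_le_SUP_plus:
  fixes X Y :: "real \<Rightarrow> real^'n"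
  assumes "a \<le> b" "continuous_on {a..b} Y" "\<And>s. s \<in> {a..b} \<Longrightarrow> norm (X s - Y s) \<le> d"
  shows "(SUP s\<in>{a..b}. X s $ i) \<le> (SUP s\<in>{a..b}. Y s $ i) + d"
proof (rule cSUP_least)
  show "{a..b} \<noteq> {}" using assms(1) by simp
  fix s assume s: "s \<in> {a..b}"
  have "X s $ i - Y s $ i \<le> norm (X s - Y s)"
    by (metis abs_le_D1 component_le_norm_cart vector_minus_component)
  also have "\<dots> \<le> d" using assms(3) s by blast
  finally have "X s $ i \<le> Y s $ i + d" by simp
  also have "Y s $ i \<le> (SUP s\<in>{a..b}. Y s $ i)"
    by (rule cSUP_upper[OF s bdd_above_component_image[OF assms(2)]])
  finally show "X s $ i \<le> (SUP s\<in>{a..b}. Y s $ i) + d" by simp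
qed

lemma norm_delay_max_diff_le:
  fixes X Y :: "real \<Rightarrow> real^'n"
  assumes "0 \<le> \<tau>" "continuous_on {t-\<tau>..t} X" "continuous_on {t-\<tau>..t} Y"
    and "\<And>s. s \<in> {t-\<tau>..t} \<Longrightarrow> norm (X s - Y s) \<le> d"
  shows "norm (delay_max \<tau> X t - delay_max \<tau> Y t) \<le> real CARD('n) * d"
proof -
  have comp: "\<bar>(delay_max \<tau> X t - delay_max \<tau> Y t) $ i\<bar> \<le> d" for i
    using SUP_component_le_SUP_plus[of "t-\<tau>" t Y X d i] SUP_component_le_SUP_plus[of "t-\<tau>" t X Y d i]
      assms by (simp add: delay_max_def norm_minus_commute)
  have "norm (delay_max \<tau> X t - delay_max \<tau> Y t) \<le> (\<Sum>i\<in>UNIV. \<bar>(delay_max \<tau> X t - delay_max \<tau> Y t) $ i\<bar>)"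
    by (rule norm_le_l1_cart)
  also have "\<dots> \<le> (\<Sum>i\<in>(UNIV::'n set). d)"
    by (rule sum_mono) (rule comp)
  finally show ?thesis by simp
qed

lemma delay_max_zero: "0 \<le> \<tau> \<Longrightarrow> delay_max \<tau> (\<lambda>_. 0) t = 0"
  by (simp add: delay_max_def vec_eq_iff)

lemma delay_max_shift: "delay_max \<tau> (\<lambda>s. X (s + h)) t = delay_max \<tau> X (t + h)"
proof -
  have im: "(\<lambda>s. s + h) ` {t-\<tau>..t} = {t+h-\<tau>..t+h}"
    by simp
  have "(SUP s\<in>{t-\<tau>..t}. X (s + h) $ i) = (SUP s\<in>(\<lambda>s. s + h) ` {t-\<tau>..t}. X s $ i)" for i
    by (simp only: image_image)
  then show ?thesis
    unfolding delay_max_def im by simp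
qed

lemma continuous_on_delay_max:
  fixes X :: "real \<Rightarrow> real^'n"
  assumes "0 \<le> \<tau>" "continuous_on {a-\<tau>..b} X"
  shows "continuous_on {a..b} (delay_max \<tau> X)"
  unfolding continuous_on_iff
proof (intro ballI allI impI)
  fix t e :: real assume t: "t \<in> {a..b}" and e: "0 < e"
  define e' where "e' = e / (2 * real CARD('n))"
  have "0 < e'" using e by (simp add: e'_def)
  moreover have "uniformly_continuous_on {a-\<tau>..b} X"
    using assms(2) by (intro compact_uniformly_continuous) auto
  ultimately obtain d where d: "0 < d" and dX: "\<And>s s'. s \<in> {a-\<tau>..b} \<Longrightarrow> s' \<in> {a-\<tau>..b} \<Longrightarrow>
      dist s' s < d \<Longrightarrow> dist (X s') (X s) < e'"
    unfolding uniformly_continuous_on_def by metis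
  show "\<exists>d>0. \<forall>t'\<in>{a..b}. dist t' t < d \<longrightarrow> dist (delay_max \<tau> X t') (delay_max \<tau> X t) < e"
  proof (intro exI[of _ d] conjI ballI impI d)
    fix t' assume t': "t' \<in> {a..b}" and dt: "dist t' t < d"
    have "norm (delay_max \<tau> X t - delay_max \<tau> (\<lambda>s. X (s + (t' - t))) t) \<le> real CARD('n) * e'"
    proof (rule norm_delay_max_diff_le[OF assms(1)])
      show "continuous_on {t-\<tau>..t} X"
        by (rule continuous_on_subset[OF assms(2)]) (use t in auto)
      show "continuous_on {t-\<tau>..t} (\<lambda>s. X (s + (t' - t)))"
        by (rule continuous_on_compose2[OF assms(2)]) (use t t' in \<open>auto intro!: continuous_intros\<close>)
      show "norm (X s - X (s + (t' - t))) \<le> e'" if "s \<in> {t-\<tau>..t}" for s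
        using dX[of s "s + (t' - t)"] that t t' dt by (auto simp: dist_norm norm_minus_commute)
    qed
    also have "\<dots> < e" using e by (simp add: e'_def)
    finally show "dist (delay_max \<tau> X t') (delay_max \<tau> X t) < e"
      by (simp add: delay_max_shift dist_norm norm_minus_commute)
  qed
qed

locale delay_integral_equation =
  fixes T \<tau> L :: real
    and \<phi> :: "real \<Rightarrow> 'a::euclidean_space"
    and f :: "(real \<Rightarrow> 'a) \<Rightarrow> real \<Rightarrow> 'a"
  assumes T_pos: "0 < T" and tau_pos: "0 < \<tau>" and L_nonneg: "0 \<le> L"
    and continuous_phi: "continuous_on {-\<tau>..0} \<phi>"
    and f_lipschitz: "\<And>X Y r d. r \<in> {0..T} \<Longrightarrow> continuous_on {r-\<tau>..r} X \<Longrightarrow>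
        continuous_on {r-\<tau>..r} Y \<Longrightarrow> (\<And>s. s \<in> {r-\<tau>..r} \<Longrightarrow> norm (X s - Y s) \<le> d) \<Longrightarrow>
        norm (f X r - f Y r) \<le> L * d"
    and f_integrable: "\<And>X. continuous_on {-\<tau>..T} X \<Longrightarrow> f X integrable_on {0..T}"
begin

definition picard :: "(real \<Rightarrow> 'a) \<Rightarrow> real \<Rightarrow> 'a" where
  "picard X s = (if s \<le> 0 then \<phi> s else \<phi> 0 + integral {0..s} (f X))"

definition integral_solution :: "(real \<Rightarrow> 'a) \<Rightarrow> bool" where
  "integral_solution X \<longleftrightarrow> continuous_on {-\<tau>..T} X \<and> (\<forall>s\<in>{-\<tau>..T}. X s = picard X s)"

lemma integral_solution_continuous: "integral_solution X \<Longrightarrow> continuous_on {-\<tau>..T} X"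
  by (simp add: integral_solution_def)

lemma integral_solution_picard: "integral_solution X \<Longrightarrow> s \<in> {-\<tau>..T} \<Longrightarrow> X s = picard X s"
  by (simp add: integral_solution_def)

text \<open>Bielecki weight: the rate 2L + 1 makes picard a contraction with constant 1/2
  (see L_integral_weight_le).\<close>

definition weight :: "real \<Rightarrow> real" where
  "weight s = exp ((2 * L + 1) * max 0 s)"

lemma weight_pos: "0 < weight s"
  by (simp add: weight_def)

lemma one_le_weight: "1 \<le> weight s"
  using L_nonneg by (simp add: weight_def)

lemma weight_mono: "s \<le> t \<Longrightarrow> weight s \<le> weight t"
  using L_nonneg by (simp add: weight_def mult_left_mono)

lemma continuous_on_weight: "continuous_on S weight"
  unfolding weight_def[abs_def] by (intro continuous_intros)

lemma has_integral_weight: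
  assumes "0 \<le> t"
  shows "(weight has_integral (weight t - 1) / (2 * L + 1)) {0..t}"
proof -
  define K where "K = 2 * L + 1"
  have K: "0 < K" using L_nonneg by (simp add: K_def)
  have "((\<lambda>r. exp (K * r)) has_integral exp (K * t) / K - exp (K * 0) / K) {0..t}"
  proof (rule fundamental_theorem_of_calculus[OF assms])
    show "((\<lambda>r. exp (K * r) / K) has_vector_derivative exp (K * r)) (at r within {0..t})" for r
      using K by (auto intro!: derivative_eq_intros simp: has_real_derivative_iff_has_vector_derivative[symmetric])
  qed
  moreover have "(weight has_integral I) {0..t} \<longleftrightarrow> ((\<lambda>r. exp (K * r)) has_integral I) {0..t}" for I
    by (rule has_integral_cong) (simp add: weight_def K_def)
  moreover have "exp (K * t) / K - exp (K * 0) / K = (weight t - 1) / (2 * L + 1)"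
    using assms by (simp add: weight_def K_def diff_divide_distrib)
  ultimately show ?thesis
    by simp
qed

lemma L_integral_weight_le: "L * ((weight t - 1) / (2 * L + 1)) \<le> weight t / 2"
proof -
  have "L * ((weight t - 1) / (2 * L + 1)) \<le> L * (weight t / (2 * L + 1))"
    using L_nonneg by (intro mult_left_mono divide_right_mono) auto
  also have "\<dots> = weight t * (L / (2 * L + 1))"
    by simp
  also have "\<dots> \<le> weight t * (1 / 2)"
    using L_nonneg weight_pos[of t] by (intro mult_left_mono) (simp_all add: divide_simps)
  finally show ?thesis by simp
qed

lemma f_integrable_on_subinterval:
  "continuous_on {-\<tau>..T} X \<Longrightarrow> t \<le> T \<Longrightarrow> f X integrable_on {0..t}"
  by (rule integrable_on_subinterval[OF f_integrable]) auto

lemma continuous_on_picard: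
  assumes "continuous_on {-\<tau>..T} X"
  shows "continuous_on {-\<tau>..T} (picard X)"
proof -
  have "continuous_on ({-\<tau>..0} \<union> {0..T}) (\<lambda>s. if s \<le> 0 then \<phi> s else \<phi> 0 + integral {0..s} (f X))"
    using continuous_phi indefinite_integral_continuous_1[OF f_integrable[OF assms]]
    by (intro continuous_on_cases continuous_intros) auto
  moreover have "{-\<tau>..0} \<union> {0..T} = {-\<tau>..T}"
    using tau_pos T_pos by auto
  ultimately show ?thesis
    by (simp add: picard_def[abs_def])
qed

lemma integral_solution_integral_eq:
  assumes "integral_solution X" "t \<in> {0..T}"
  shows "X t = X 0 + integral {0..t} (f X)"
proof -
  have "X 0 = \<phi> 0" and "X t = picard X t"
    using integral_solution_picard[OF assms(1), of 0] integral_solution_picard[OF assms(1), of t]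
      assms(2) tau_pos by (auto simp: picard_def)
  then show ?thesis
    using assms(2) by (cases "t = 0") (auto simp: picard_def)
qed

lemma picard_contraction:
  assumes X: "continuous_on {-\<tau>..T} X" and Y: "continuous_on {-\<tau>..T} Y"
    and XY: "\<And>s. s \<in> {-\<tau>..T} \<Longrightarrow> norm (X s - Y s) \<le> D * weight s"
    and t: "t \<in> {-\<tau>..T}"
  shows "norm (picard X t - picard Y t) \<le> D / 2 * weight t"
proof -
  have "0 \<le> D * weight t"
    using XY[OF t] norm_ge_zero order_trans by blast
  then have D: "0 \<le> D"
    using weight_pos[of t] by (simp add: zero_le_mult_iff)
  show ?thesis
  proof (cases "t \<le> 0")
    case True
    then show ?thesis
      using D weight_pos[of t] by (simp add: picard_def)
  next
    case False
    have iX: "f X integrable_on {0..t}" and iY: "f Y integrable_on {0..t}"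
      using t by (auto intro: f_integrable_on_subinterval X Y)
    have weight_int: "((\<lambda>r. D * (L * weight r)) has_integral D * (L * ((weight t - 1) / (2 * L + 1)))) {0..t}"
      using False by (intro has_integral_mult_right has_integral_weight) simp
    have lip: "norm (f X r - f Y r) \<le> D * (L * weight r)" if r: "r \<in> {0..t}" for r
    proof -
      have "norm (X s - Y s) \<le> D * weight r" if "s \<in> {r-\<tau>..r}" for s
        using XY[of s] that r t D weight_mono[of s r] by (auto intro: order_trans mult_left_mono)
      then have "norm (f X r - f Y r) \<le> L * (D * weight r)"
        using r t by (intro f_lipschitz continuous_on_subset[OF X] continuous_on_subset[OF Y]) auto
      then show ?thesis by (simp add: algebra_simps)
    qed
    have "norm (picard X t - picard Y t) = norm (integral {0..t} (\<lambda>r. f X r - f Y r))"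
      using False by (simp add: picard_def integral_diff[OF iX iY])
    also have "\<dots> \<le> integral {0..t} (\<lambda>r. D * (L * weight r))"
      using iX iY weight_int lip by (intro integral_norm_bound_integral integrable_diff) auto
    also have "\<dots> = D * (L * ((weight t - 1) / (2 * L + 1)))"
      using weight_int by (rule integral_unique)
    also have "\<dots> \<le> D * (weight t / 2)"
      using L_integral_weight_le D by (rule mult_left_mono)
    finally show ?thesis by simp
  qed
qed

lemma weighted_norm_max:
  assumes "continuous_on {-\<tau>..T} Z"
  obtains D s0 where "\<And>s. s \<in> {-\<tau>..T} \<Longrightarrow> norm (Z s) \<le> D * weight s"
    "s0 \<in> {-\<tau>..T}" "norm (Z s0) = D * weight s0"
proof -
  have "{-\<tau>..T} \<noteq> {}"
    using tau_pos T_pos by simp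
  then show ?thesis
    using continuous_on_weighted_norm_max[OF compact_Icc _ assms continuous_on_weight weight_pos] that
    by blast
qed

lemma integral_solution_unique:
  assumes "integral_solution X" "integral_solution Y" "s \<in> {-\<tau>..T}"
  shows "X s = Y s"
proof -
  have X: "continuous_on {-\<tau>..T} X" and Y: "continuous_on {-\<tau>..T} Y"
    using assms(1,2) by (auto intro: integral_solution_continuous)
  obtain D s0 where D: "\<And>s. s \<in> {-\<tau>..T} \<Longrightarrow> norm (X s - Y s) \<le> D * weight s"
    and s0: "s0 \<in> {-\<tau>..T}" "norm (X s0 - Y s0) = D * weight s0"
    using weighted_norm_max[OF continuous_on_diff[OF X Y]] by blast
  have "D * weight s0 = norm (picard X s0 - picard Y s0)"
    using integral_solution_picard[OF assms(1) s0(1)] integral_solution_picard[OF assms(2) s0(1)] s0(2)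
    by simp
  also have "\<dots> \<le> D / 2 * weight s0"
    using X Y D s0(1) by (rule picard_contraction)
  finally have "D \<le> 0"
    using weight_pos[of s0] by (auto simp: mult_le_0_iff)
  then have "norm (X s - Y s) \<le> 0"
    using D[OF assms(3)] weight_pos[of s] by (meson mult_nonpos_nonneg less_imp_le order_trans)
  then show ?thesis by simp
qed

lemma norm_picard_zero_le:
  assumes A: "\<And>r. r \<in> {0..T} \<Longrightarrow> norm (f (\<lambda>_. 0) r) \<le> A"
    and P: "\<And>s. s \<in> {-\<tau>..0} \<Longrightarrow> norm (\<phi> s) \<le> P"
    and t: "t \<in> {-\<tau>..T}"
  shows "norm (picard (\<lambda>_. 0) t) \<le> P + A * T"
proof -
  have "norm (f (\<lambda>_. 0) 0) \<le> A"
    using A T_pos by simp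
  then have "0 \<le> A"
    by (rule order_trans[OF norm_ge_zero])
  then have "0 \<le> A * T"
    using T_pos by simp
  show ?thesis
  proof (cases "t \<le> 0")
    case True
    then show ?thesis
      using P[of t] t \<open>0 \<le> A * T\<close> by (simp add: picard_def)
  next
    case False
    have "norm (integral {0..t} (f (\<lambda>_. 0))) \<le> integral {0..t} (\<lambda>_. A)"
      using t A by (intro integral_norm_bound_integral f_integrable_on_subinterval) auto
    also have "\<dots> \<le> A * T"
      using False t \<open>0 \<le> A\<close> by (simp add: mult.commute mult_left_mono)
    finally show ?thesis
      using False P[of 0] tau_pos norm_triangle_ineq[of "\<phi> 0" "integral {0..t} (f (\<lambda>_. 0))"]
      by (simp add: picard_def)
  qed
qed

lemma integral_solution_bound:
  assumes A: "\<And>r. r \<in> {0..T} \<Longrightarrow> norm (f (\<lambda>_. 0) r) \<le> A"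
    and P: "\<And>s. s \<in> {-\<tau>..0} \<Longrightarrow> norm (\<phi> s) \<le> P"
    and X: "integral_solution X" and s: "s \<in> {-\<tau>..T}"
  shows "norm (X s) \<le> 2 * (P + A * T) * weight T"
proof -
  have Xc: "continuous_on {-\<tau>..T} X"
    using X by (rule integral_solution_continuous)
  obtain D s0 where D: "\<And>s. s \<in> {-\<tau>..T} \<Longrightarrow> norm (X s) \<le> D * weight s"
    and s0: "s0 \<in> {-\<tau>..T}" "norm (X s0) = D * weight s0"
    using weighted_norm_max[OF Xc] by blast
  have PA: "0 \<le> P + A * T"
    using norm_picard_zero_le[OF A P s0(1)] norm_ge_zero order_trans by blast
  have "D * weight s0 = norm (picard X s0)"
    using integral_solution_picard[OF X s0(1)] s0(2) by simp
  also have "\<dots> \<le> norm (picard X s0 - picard (\<lambda>_. 0) s0) + norm (picard (\<lambda>_. 0) s0)"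
    using norm_triangle_sub[of "picard X s0" "picard (\<lambda>_. 0) s0"] by linarith
  also have "\<dots> \<le> D / 2 * weight s0 + (P + A * T) * weight s0"
  proof (rule add_mono)
    show "norm (picard X s0 - picard (\<lambda>_. 0) s0) \<le> D / 2 * weight s0"
      using Xc D s0(1) by (intro picard_contraction) auto
    show "norm (picard (\<lambda>_. 0) s0) \<le> (P + A * T) * weight s0"
      using norm_picard_zero_le[OF A P s0(1)] mult_left_mono[OF one_le_weight PA, of s0] by simp
  qed
  finally have "D * weight s0 \<le> (2 * (P + A * T)) * weight s0"
    by (simp add: field_simps)
  then have "D \<le> 2 * (P + A * T)"
    using weight_pos[of s0] by simp
  moreover have "0 \<le> D"
    using s0 weight_pos[of s0] norm_ge_zero[of "X s0"] by (simp add: zero_le_mult_iff)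
  ultimately have "D * weight s \<le> 2 * (P + A * T) * weight T"
    using s weight_mono[of s T] weight_pos[of s] by (intro mult_mono) auto
  then show ?thesis
    using D[OF s] by linarith
qed

lemma integral_solution_f_bound:
  assumes A: "\<And>r. r \<in> {0..T} \<Longrightarrow> norm (f (\<lambda>_. 0) r) \<le> A"
    and P: "\<And>s. s \<in> {-\<tau>..0} \<Longrightarrow> norm (\<phi> s) \<le> P"
    and X: "integral_solution X" and r: "r \<in> {0..T}"
  shows "norm (f X r) \<le> A + L * (2 * (P + A * T) * weight T)"
proof -
  have X_cont: "continuous_on {r-\<tau>..r} X"
    using r by (intro continuous_on_subset[OF integral_solution_continuous[OF X]]) auto
  have "norm (X s - 0) \<le> 2 * (P + A * T) * weight T" if "s \<in> {r-\<tau>..r}" for s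
    using integral_solution_bound[OF A P X, of s] that r by simp
  then have "norm (f X r - f (\<lambda>_. 0) r) \<le> L * (2 * (P + A * T) * weight T)"
    using r X_cont by (intro f_lipschitz) auto
  then show ?thesis
    using A[OF r] norm_triangle_ineq2[of "f X r" "f (\<lambda>_. 0) r"] by linarith
qed

text \<open>The fixed point is sought in the complete space of bounded continuous functions on the
  real line, as z = X / weight extended from [-tau, T] by clamping.\<close>

lemma integral_solution_exists: "\<exists>X. integral_solution X"
proof -
  define scaled :: "(real \<Rightarrow>\<^sub>C 'a) \<Rightarrow> real \<Rightarrow> 'a" where "scaled z s = weight s *\<^sub>R z s" for z s
  have scaled_cont: "continuous_on S (scaled z)" for S z
    unfolding scaled_def by (intro continuous_intros continuous_on_weight) auto
  have clamp: "clamp (-\<tau>) T t \<in> {-\<tau>..T}" for t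
    using tau_pos T_pos clamp_in_interval[of "-\<tau>" T t] by (simp add: cbox_interval)
  have "\<forall>z. \<exists>g. \<forall>t. apply_bcontfun g t = picard (scaled z) (clamp (-\<tau>) T t) /\<^sub>R weight (clamp (-\<tau>) T t)"
  proof
    fix z
    have "continuous_on (cbox (-\<tau>) T) (\<lambda>t. picard (scaled z) t /\<^sub>R weight t)"
      using continuous_on_picard[OF scaled_cont] weight_pos
      by (auto intro!: continuous_intros continuous_on_weight simp: cbox_interval less_imp_neq[symmetric])
    then show "\<exists>g. \<forall>t. apply_bcontfun g t = picard (scaled z) (clamp (-\<tau>) T t) /\<^sub>R weight (clamp (-\<tau>) T t)"
      by (rule continuous_on_cbox_bcontfunE) blast
  qed
  then obtain \<Psi> :: "(real \<Rightarrow>\<^sub>C 'a) \<Rightarrow> (real \<Rightarrow>\<^sub>C 'a)" where \<Psi>: "\<And>z t. \<Psi> z t = picard (scaled z) (clamp (-\<tau>) T t) /\<^sub>R weight (clamp (-\<tau>) T t)"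
    by (metis (no_types))
  have "dist (\<Psi> z) (\<Psi> z') \<le> 1/2 * dist z z'" for z z'
  proof (rule dist_bound)
    fix t
    define s where "s = clamp (-\<tau>) T t"
    have "norm (scaled z r - scaled z' r) \<le> dist z z' * weight r" for r
      using dist_bounded[of z r z'] weight_pos[of r]
      by (simp add: scaled_def dist_norm mult.commute flip: scaleR_diff_right)
    then have "norm (picard (scaled z) s - picard (scaled z') s) \<le> dist z z' / 2 * weight s"
      using clamp[of t] by (intro picard_contraction scaled_cont) (auto simp: s_def)
    moreover have "dist (\<Psi> z t) (\<Psi> z' t) = norm (picard (scaled z) s - picard (scaled z') s) / weight s"
      using weight_pos[of s]
      by (simp add: \<Psi> s_def[symmetric] dist_norm divide_inverse_commute flip: scaleR_diff_right)
    ultimately show "dist (\<Psi> z t) (\<Psi> z' t) \<le> 1/2 * dist z z'"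
      using weight_pos[of s] by (simp add: divide_le_eq)
  qed
  then obtain z where z: "\<Psi> z = z"
    using banach_fix_type[of "1/2" \<Psi>] by auto
  have "scaled z s = picard (scaled z) s" if "s \<in> {-\<tau>..T}" for s
    using \<Psi>[of z s] weight_pos[of s] that by (simp add: z scaled_def cbox_interval)
  then show ?thesis
    unfolding integral_solution_def using scaled_cont by blast
qed

end

definition delay_rhs :: "real \<Rightarrow> (real^'n \<Rightarrow> real^'n \<Rightarrow> real^'n) \<Rightarrow> (real^'n \<Rightarrow> real^'n \<Rightarrow> real^'m^'n)
    \<Rightarrow> (real \<Rightarrow> real^'m) \<Rightarrow> (real \<Rightarrow> real^'n) \<Rightarrow> real \<Rightarrow> real^'n" where
  "delay_rhs \<tau> F0 F1 u X t = F0 (X t) (delay_max \<tau> X t) + F1 (X t) (delay_max \<tau> X t) *v u t"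

lemma continuous_on_matrix_vector_mult: "continuous_on S (\<lambda>p. fst p *v (snd p :: real^'m) :: real^'n)"
  unfolding matrix_vector_mult_def by (intro continuous_intros continuous_on_vec_lambda)

lemma is_solution_delay_rhs:
  "is_solution T \<tau> F0 F1 \<phi> u x \<longleftrightarrow> continuous_on {-\<tau>..T} x \<and> W1inf T x \<and>
     (AE t in lebesgue_on {0<..<T}. (x has_vector_derivative delay_rhs \<tau> F0 F1 u x t) (at t)) \<and>
     (\<forall>t\<in>{-\<tau>..0}. x t = \<phi> t)"
  by (simp add: is_solution_def delay_rhs_def)

definition W1inf_bound :: "real \<Rightarrow> real \<Rightarrow> real \<Rightarrow> real \<Rightarrow> real" where
  "W1inf_bound T L A P =
    max (2 * (P + A * T) * exp ((2 * L + 1) * T)) (A + L * (2 * (P + A * T) * exp ((2 * L + 1) * T)))"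

locale max_delay_system =
  fixes T \<tau> L0 L1 B :: real
    and F0 :: "real^'n \<Rightarrow> real^'n \<Rightarrow> real^'n"
    and F1 :: "real^'n \<Rightarrow> real^'n \<Rightarrow> real^'m^'n"
    and \<phi> :: "real \<Rightarrow> real^'n"
    and u :: "real \<Rightarrow> real^'m"
  assumes T_pos: "0 < T" and tau_pos: "0 < \<tau>"
    and F0_lipschitz: "L0-lipschitz_on UNIV (\<lambda>(x, v). F0 x v)"
    and F1_lipschitz: "L1-lipschitz_on UNIV (\<lambda>(x, v). F1 x v)"
    and continuous_phi: "continuous_on {-\<tau>..0} \<phi>"
    and u_measurable: "u \<in> borel_measurable (lebesgue_on {0..T})"
    and u_bounded: "\<And>t. norm (u t) \<le> B"
begin

lemma B_nonneg: "0 \<le> B"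
  using u_bounded norm_ge_zero order_trans by blast

lemma norm_delay_rhs_diff_le:
  assumes X: "continuous_on {t-\<tau>..t} X" and Y: "continuous_on {t-\<tau>..t} Y"
    and XY: "\<And>s. s \<in> {t-\<tau>..t} \<Longrightarrow> norm (X s - Y s) \<le> d"
  shows "norm (delay_rhs \<tau> F0 F1 u X t - delay_rhs \<tau> F0 F1 u Y t) \<le> (L0 + L1 * B) * (1 + real CARD('n)) * d"
proof -
  let ?x = "X t" and ?y = "Y t" and ?v = "delay_max \<tau> X t" and ?w = "delay_max \<tau> Y t"
  have L0: "0 \<le> L0" and L1: "0 \<le> L1"
    using F0_lipschitz F1_lipschitz by (auto dest: lipschitz_on_nonneg)
  have "norm (?x - ?y) \<le> d"
    using XY tau_pos by simp
  moreover have "norm (?v - ?w) \<le> real CARD('n) * d"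
    using tau_pos X Y XY by (intro norm_delay_max_diff_le) auto
  ultimately have e: "norm (?x - ?y) + norm (?v - ?w) \<le> (1 + real CARD('n)) * d"
    by (simp add: algebra_simps)
  have "norm (F0 ?x ?v - F0 ?y ?w) \<le> L0 * (norm (?x - ?y) + norm (?v - ?w))"
    using lipschitz_on_pairD[OF F0_lipschitz] by (simp add: dist_norm)
  moreover have "norm ((F1 ?x ?v - F1 ?y ?w) *v u t) \<le> L1 * (norm (?x - ?y) + norm (?v - ?w)) * B"
  proof -
    have "norm ((F1 ?x ?v - F1 ?y ?w) *v u t) \<le> norm (F1 ?x ?v - F1 ?y ?w) * norm (u t)"
      by (rule norm_matrix_vector_mult_le)
    also have "\<dots> \<le> L1 * (norm (?x - ?y) + norm (?v - ?w)) * B"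
      using lipschitz_on_pairD[OF F1_lipschitz] u_bounded L1
      by (intro mult_mono) (auto simp: dist_norm)
    finally show ?thesis .
  qed
  ultimately have "norm (delay_rhs \<tau> F0 F1 u X t - delay_rhs \<tau> F0 F1 u Y t)
      \<le> (L0 + L1 * B) * (norm (?x - ?y) + norm (?v - ?w))"
    unfolding delay_rhs_def using norm_triangle_ineq[of "F0 ?x ?v - F0 ?y ?w" "(F1 ?x ?v - F1 ?y ?w) *v u t"]
    by (simp add: matrix_vector_mult_diff_rdistrib algebra_simps)
  also have "\<dots> \<le> (L0 + L1 * B) * ((1 + real CARD('n)) * d)"
    using e L0 L1 B_nonneg by (intro mult_left_mono) auto
  finally show ?thesis by (simp add: mult.assoc)
qed

lemma norm_delay_rhs_zero_le: "norm (delay_rhs \<tau> F0 F1 u (\<lambda>_. 0) t) \<le> norm (F0 0 0) + norm (F1 0 0) * B"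
proof -
  have "norm (delay_rhs \<tau> F0 F1 u (\<lambda>_. 0) t) \<le> norm (F0 0 0) + norm (F1 0 0 *v u t)"
    using tau_pos by (simp add: delay_rhs_def delay_max_zero norm_triangle_ineq)
  also have "norm (F1 0 0 *v u t) \<le> norm (F1 0 0) * B"
    using norm_matrix_vector_mult_le[of "F1 0 0" "u t"] mult_left_mono[OF u_bounded[of t], of "norm (F1 0 0)"]
    by simp
  finally show ?thesis by simp
qed

lemma delay_rhs_measurable:
  assumes "continuous_on {-\<tau>..T} X"
  shows "delay_rhs \<tau> F0 F1 u X \<in> borel_measurable (lebesgue_on {0..T})"
proof -
  have X: "X \<in> borel_measurable (lebesgue_on {0..T})"
    using assms tau_pos
    by (intro continuous_imp_measurable_on_sets_lebesgue continuous_on_subset[OF assms]) auto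
  have V: "delay_max \<tau> X \<in> borel_measurable (lebesgue_on {0..T})"
    using assms tau_pos
    by (intro continuous_imp_measurable_on_sets_lebesgue continuous_on_delay_max) auto
  have "continuous_on UNIV (\<lambda>p. F0 (fst p) (snd p))" "continuous_on UNIV (\<lambda>p. F1 (fst p) (snd p))"
    using lipschitz_on_continuous_on[OF F0_lipschitz] lipschitz_on_continuous_on[OF F1_lipschitz]
    by (simp_all add: case_prod_beta')
  then show ?thesis
    unfolding delay_rhs_def[abs_def]
    by (intro borel_measurable_add borel_measurable_continuous_Pair[OF X V]
        borel_measurable_continuous_Pair[OF _ u_measurable continuous_on_matrix_vector_mult])
qed

lemma norm_delay_rhs_le:
  assumes "continuous_on {t-\<tau>..t} X" "\<And>s. s \<in> {t-\<tau>..t} \<Longrightarrow> norm (X s) \<le> d"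
  shows "norm (delay_rhs \<tau> F0 F1 u X t)
    \<le> norm (F0 0 0) + norm (F1 0 0) * B + (L0 + L1 * B) * (1 + real CARD('n)) * d"
  using norm_delay_rhs_diff_le[of t X "\<lambda>_. 0" d] assms norm_delay_rhs_zero_le[of t]
    norm_triangle_ineq2[of "delay_rhs \<tau> F0 F1 u X t" "delay_rhs \<tau> F0 F1 u (\<lambda>_. 0) t"]
  by simp

lemma delay_rhs_bounded:
  assumes "continuous_on {-\<tau>..T} X"
  obtains C where "\<And>t. t \<in> {0..T} \<Longrightarrow> norm (delay_rhs \<tau> F0 F1 u X t) \<le> C"
proof -
  obtain d where d: "\<And>s. s \<in> {-\<tau>..T} \<Longrightarrow> norm (X s) \<le> d"
    using continuous_on_interval_norm_bound[OF assms] by blast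
  have "norm (delay_rhs \<tau> F0 F1 u X t)
      \<le> norm (F0 0 0) + norm (F1 0 0) * B + (L0 + L1 * B) * (1 + real CARD('n)) * d" if "t \<in> {0..T}" for t
    using that d by (intro norm_delay_rhs_le continuous_on_subset[OF assms]) auto
  then show ?thesis
    by (rule that)
qed

lemma Linf_delay_rhs:
  assumes "continuous_on {-\<tau>..T} X"
  shows "Linf T (delay_rhs \<tau> F0 F1 u X)"
proof -
  obtain C where "\<And>t. t \<in> {0..T} \<Longrightarrow> norm (delay_rhs \<tau> F0 F1 u X t) \<le> C"
    using delay_rhs_bounded[OF assms] by blast
  then show ?thesis
    by (rule LinfI[OF delay_rhs_measurable[OF assms]])
qed

sublocale delay_integral_equation T \<tau> "(L0 + L1 * B) * (1 + real CARD('n))" \<phi> "delay_rhs \<tau> F0 F1 u"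
proof
  show "0 < T" by (rule T_pos)
  show "0 < \<tau>" by (rule tau_pos)
  show "continuous_on {-\<tau>..0} \<phi>" by (rule continuous_phi)
  show "0 \<le> (L0 + L1 * B) * (1 + real CARD('n))"
    using lipschitz_on_nonneg[OF F0_lipschitz] lipschitz_on_nonneg[OF F1_lipschitz] B_nonneg by simp
  show "norm (delay_rhs \<tau> F0 F1 u X r - delay_rhs \<tau> F0 F1 u Y r) \<le> (L0 + L1 * B) * (1 + real CARD('n)) * d"
    if "continuous_on {r-\<tau>..r} X" "continuous_on {r-\<tau>..r} Y" "\<And>s. s \<in> {r-\<tau>..r} \<Longrightarrow> norm (X s - Y s) \<le> d"
    for X Y r d
    using that by (rule norm_delay_rhs_diff_le)
  show "delay_rhs \<tau> F0 F1 u X integrable_on {0..T}" if X: "continuous_on {-\<tau>..T} X" for X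
  proof -
    obtain C where "\<And>t. t \<in> {0..T} \<Longrightarrow> norm (delay_rhs \<tau> F0 F1 u X t) \<le> C"
      using delay_rhs_bounded[OF X] by blast
    with delay_rhs_measurable[OF X] show ?thesis
      by (rule bounded_measurable_integrable_on)
  qed
qed

lemma integral_solution_imp_is_solution:
  assumes u': "AE t in lebesgue_on {0..T}. u' t = u t" and x: "integral_solution x"
  shows "is_solution T \<tau> F0 F1 \<phi> u' x"
proof -
  have xc: "continuous_on {-\<tau>..T} x" and init: "\<forall>t\<in>{-\<tau>..0}. x t = \<phi> t"
    using integral_solution_continuous[OF x] integral_solution_picard[OF x] T_pos
    by (auto simp: picard_def)
  have repr: "\<And>t. t \<in> {0..T} \<Longrightarrow> x t = x 0 + integral {0..t} (delay_rhs \<tau> F0 F1 u x)"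
    using x by (rule integral_solution_integral_eq)
  have "Linf T x"
    using tau_pos by (intro continuous_on_imp_Linf continuous_on_subset[OF xc]) auto
  then have "W1inf T x"
    unfolding W1inf_def using Linf_delay_rhs[OF xc] repr by blast
  moreover have "AE t in lebesgue_on {0<..<T}. (x has_vector_derivative delay_rhs \<tau> F0 F1 u' x t) (at t)"
  proof -
    obtain N1 where N1: "negligible N1"
      and deriv: "\<And>t. t \<in> {0<..<T} \<Longrightarrow> t \<notin> N1 \<Longrightarrow> (x has_vector_derivative delay_rhs \<tau> F0 F1 u x t) (at t)"
      using integral_representation_has_vector_derivative_ae[OF Linf_delay_rhs[OF xc] repr] by blast
    obtain N2 where N2: "negligible N2" and eq: "\<And>t. t \<in> {0..T} \<Longrightarrow> t \<notin> N2 \<Longrightarrow> u' t = u t"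
      using AE_lebesgue_on_negligibleE[OF u' sets_lebesgue_Icc] by blast
    show ?thesis
      using N1 N2 deriv eq
      by (intro AE_lebesgue_on_negligibleI[of "N1 \<union> N2"] sets_lebesgue_Ioo) (auto simp: delay_rhs_def)
  qed
  ultimately show ?thesis
    using xc init by (simp add: is_solution_delay_rhs)
qed

lemma is_solution_imp_integral_solution:
  assumes u': "AE t in lebesgue_on {0..T}. u' t = u t" and sol: "is_solution T \<tau> F0 F1 \<phi> u' x"
  shows "integral_solution x"
proof -
  have xc: "continuous_on {-\<tau>..T} x" and W: "W1inf T x" and init: "\<forall>t\<in>{-\<tau>..0}. x t = \<phi> t"
    and ode: "AE t in lebesgue_on {0<..<T}. (x has_vector_derivative delay_rhs \<tau> F0 F1 u' x t) (at t)"
    using sol by (auto simp: is_solution_delay_rhs)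
  obtain g where g: "Linf T g" and repr: "\<And>t. t \<in> {0..T} \<Longrightarrow> x t = x 0 + integral {0..t} g"
    using W unfolding W1inf_def by blast
  obtain N1 where N1: "negligible N1"
    and deriv_g: "\<And>t. t \<in> {0<..<T} \<Longrightarrow> t \<notin> N1 \<Longrightarrow> (x has_vector_derivative g t) (at t)"
    using integral_representation_has_vector_derivative_ae[OF g repr] by blast
  obtain N2 where N2: "negligible N2"
    and deriv_rhs: "\<And>t. t \<in> {0<..<T} \<Longrightarrow> t \<notin> N2 \<Longrightarrow>
      (x has_vector_derivative delay_rhs \<tau> F0 F1 u' x t) (at t)"
    using AE_lebesgue_on_negligibleE[OF ode sets_lebesgue_Ioo] by blast
  obtain N3 where N3: "negligible N3" and eq: "\<And>t. t \<in> {0..T} \<Longrightarrow> t \<notin> N3 \<Longrightarrow> u' t = u t"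
    using AE_lebesgue_on_negligibleE[OF u' sets_lebesgue_Icc] by blast
  have g_eq: "g t = delay_rhs \<tau> F0 F1 u x t" if "t \<in> {0<..<T}" "t \<notin> N1 \<union> N2 \<union> N3" for t
  proof -
    have "g t = delay_rhs \<tau> F0 F1 u' x t"
      using that by (intro vector_derivative_unique_at[OF deriv_g[of t] deriv_rhs[of t]]) auto
    then show ?thesis
      using that eq by (simp add: delay_rhs_def)
  qed
  have "x s = picard x s" if s: "s \<in> {-\<tau>..T}" for s
  proof (cases "s \<le> 0")
    case True
    then show ?thesis using init s by (simp add: picard_def)
  next
    case False
    have "integral {0..s} g = integral {0..s} (delay_rhs \<tau> F0 F1 u x)"
      using N1 N2 N3 g_eq s by (intro integral_spike[of "N1 \<union> N2 \<union> N3 \<union> {0, T}"]) auto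
    then show ?thesis
      using repr[of s] init tau_pos s False by (simp add: picard_def)
  qed
  with xc show ?thesis
    by (simp add: integral_solution_def)
qed

lemma integral_solution_W1inf_bounded:
  assumes P: "\<And>s. s \<in> {-\<tau>..0} \<Longrightarrow> norm (\<phi> s) \<le> P" and x: "integral_solution x"
  defines "A \<equiv> norm (F0 0 0) + norm (F1 0 0) * B" and "L \<equiv> (L0 + L1 * B) * (1 + real CARD('n))"
  shows "W1inf_bounded_by T x (W1inf_bound T L A P)"
proof -
  have A: "\<And>r. r \<in> {0..T} \<Longrightarrow> norm (delay_rhs \<tau> F0 F1 u (\<lambda>_. 0) r) \<le> A"
    unfolding A_def by (rule norm_delay_rhs_zero_le)
  have weight_T: "weight T = exp ((2 * L + 1) * T)"
    using T_pos by (simp add: weight_def L_def)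
  show ?thesis
    unfolding W1inf_bounded_by_def W1inf_bound_def
  proof (intro conjI exI[of _ "delay_rhs \<tau> F0 F1 u x"])
    show "AE t in lebesgue_on {0..T}. norm (x t) \<le> max (2 * (P + A * T) * exp ((2 * L + 1) * T))
        (A + L * (2 * (P + A * T) * exp ((2 * L + 1) * T)))"
      using integral_solution_bound[OF A P x] tau_pos unfolding weight_T L_def
      by (intro AE_I2 max.coboundedI1) (simp add: space_restrict_space)
    show "AE t in lebesgue_on {0..T}. norm (delay_rhs \<tau> F0 F1 u x t) \<le> max (2 * (P + A * T) * exp ((2 * L + 1) * T))
        (A + L * (2 * (P + A * T) * exp ((2 * L + 1) * T)))"
      using integral_solution_f_bound[OF A P x] unfolding weight_T L_def
      by (intro AE_I2 max.coboundedI2) (simp add: space_restrict_space)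
    show "delay_rhs \<tau> F0 F1 u x \<in> borel_measurable (lebesgue_on {0..T})"
      using x by (intro delay_rhs_measurable integral_solution_continuous)
    show "\<forall>t\<in>{0..T}. x t = x 0 + integral {0..t} (delay_rhs \<tau> F0 F1 u x)"
      using integral_solution_integral_eq[OF x] by blast
  qed
qed

end

lemma AE_truncation_eq:
  assumes "AE t in lebesgue_on {0..T}. norm (g t) \<le> B"
  shows "AE t in lebesgue_on {0..T}. g t = truncation T B g t"
proof -
  obtain N where "negligible N" "\<And>t. t \<in> {0..T} \<Longrightarrow> t \<notin> N \<Longrightarrow> truncation T B g t = g t"
    using truncation_ae_eq[OF assms] by blast
  then show ?thesis
    by (intro AE_lebesgue_on_negligibleI[OF _ sets_lebesgue_Icc]) auto
qed

text \<open>An L-infinity control is replaced by its truncation, which is bounded everywhere and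
  agrees with it almost everywhere, hence has the same solutions.\<close>

lemma max_delay_system_truncation:
  fixes F0 :: "real^'n \<Rightarrow> real^'n \<Rightarrow> real^'n"
    and F1 :: "real^'n \<Rightarrow> real^'n \<Rightarrow> real^'m^'n"
    and u :: "real \<Rightarrow> real^'m"
  assumes "0 < T" "0 < \<tau>"
    and "L0-lipschitz_on UNIV (\<lambda>(x, v). F0 x v)" "L1-lipschitz_on UNIV (\<lambda>(x, v). F1 x v)"
    and "continuous_on {-\<tau>..0} \<phi>" "u \<in> borel_measurable (lebesgue_on {0..T})"
  shows "max_delay_system T \<tau> L0 L1 (max 0 B) F0 F1 \<phi> (truncation T B u)"
  using assms norm_truncation_le measurable_restrict_space1[OF truncation_measurable[OF assms(6)]]
  by unfold_locales auto

lemma is_solution_exists_unique: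
  fixes F0 :: "real^'n \<Rightarrow> real^'n \<Rightarrow> real^'n"
    and F1 :: "real^'n \<Rightarrow> real^'n \<Rightarrow> real^'m^'n"
    and u :: "real \<Rightarrow> real^'m"
  assumes "0 < T" "0 < \<tau>"
    and "L0-lipschitz_on UNIV (\<lambda>(x, v). F0 x v)" "L1-lipschitz_on UNIV (\<lambda>(x, v). F1 x v)"
    and "continuous_on {-\<tau>..0} \<phi>" "Linf T u"
  shows "\<exists>x. is_solution T \<tau> F0 F1 \<phi> u x \<and>
    (\<forall>y. is_solution T \<tau> F0 F1 \<phi> u y \<longrightarrow> (\<forall>t\<in>{-\<tau>..T}. y t = x t))"
proof -
  obtain B where u: "u \<in> borel_measurable (lebesgue_on {0..T})"
    and uB: "AE t in lebesgue_on {0..T}. norm (u t) \<le> B"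
    using assms(6) unfolding Linf_def by blast
  interpret max_delay_system T \<tau> L0 L1 "max 0 B" F0 F1 \<phi> "truncation T B u"
    using max_delay_system_truncation[OF assms(1-5) u] .
  obtain x where x: "integral_solution x"
    using integral_solution_exists by blast
  show ?thesis
  proof (intro exI conjI allI impI ballI)
    show "is_solution T \<tau> F0 F1 \<phi> u x"
      using AE_truncation_eq[OF uB] x by (rule integral_solution_imp_is_solution)
    show "y t = x t" if "is_solution T \<tau> F0 F1 \<phi> u y" "t \<in> {-\<tau>..T}" for y t
      using is_solution_imp_integral_solution[OF AE_truncation_eq[OF uB] that(1)] x that(2)
      by (rule integral_solution_unique)
  qed
qed

lemma is_solution_W1inf_bounded:
  fixes F0 :: "real^'n \<Rightarrow> real^'n \<Rightarrow> real^'n"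
    and F1 :: "real^'n \<Rightarrow> real^'n \<Rightarrow> real^'m^'n"
  assumes "0 < T" "0 < \<tau>"
    and "L0-lipschitz_on UNIV (\<lambda>(x, v). F0 x v)" "L1-lipschitz_on UNIV (\<lambda>(x, v). F1 x v)"
    and "continuous_on {-\<tau>..0} \<phi>"
  shows "\<exists>C. \<forall>u x. Linf T u \<and> (AE t in lebesgue_on {0..T}. norm (u t) \<le> R)
    \<and> is_solution T \<tau> F0 F1 \<phi> u x \<longrightarrow> W1inf_bounded_by T x C"
proof -
  obtain P where P: "\<And>s. s \<in> {-\<tau>..0} \<Longrightarrow> norm (\<phi> s) \<le> P"
    using continuous_on_interval_norm_bound[OF assms(5)] by blast
  define B where "B = max 0 R"
  have "W1inf_bounded_by T x (W1inf_bound T ((L0 + L1 * B) * (1 + real CARD('n)))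
      (norm (F0 0 0) + norm (F1 0 0) * B) P)"
    if "Linf T u" "AE t in lebesgue_on {0..T}. norm (u t) \<le> R" "is_solution T \<tau> F0 F1 \<phi> u x"
    for u :: "real \<Rightarrow> real^'m" and x
  proof -
    interpret max_delay_system T \<tau> L0 L1 B F0 F1 \<phi> "truncation T R u"
      using max_delay_system_truncation[OF assms] that(1) unfolding B_def Linf_def by blast
    show ?thesis
      using P is_solution_imp_integral_solution[OF AE_truncation_eq[OF that(2)] that(3)]
      by (rule integral_solution_W1inf_bounded)
  qed
  then show ?thesis
    by blast
qed

theorem corollary3p3:
  fixes T \<tau> :: real
    and F0 :: "real^'n \<Rightarrow> real^'n \<Rightarrow> real^'n"
    and F1 :: "real^'n \<Rightarrow> real^'n \<Rightarrow> real^'m^'n"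
    and \<phi> :: "real \<Rightarrow> real^'n"
  assumes "T > 0" and "\<tau> > 0"
    and "\<exists>L. L-lipschitz_on UNIV (\<lambda>(x, v). F0 x v)"
    and "\<exists>L. L-lipschitz_on UNIV (\<lambda>(x, v). F1 x v)"
    and "C1_map (\<lambda>(x, v). F0 x v)"
    and "C1_map (\<lambda>(x, v). F1 x v)"
    and "continuous_on {-\<tau>..0} \<phi>"
  shows "(\<forall>u :: real \<Rightarrow> real^'m. Linf T u \<longrightarrow>
            (\<exists>x. is_solution T \<tau> F0 F1 \<phi> u x \<and>
                 (\<forall>y. is_solution T \<tau> F0 F1 \<phi> u y \<longrightarrow> (\<forall>t\<in>{-\<tau>..T}. y t = x t))))
       \<and> (\<forall>R. \<exists>C. \<forall>u x. Linf T u \<and> (AE t in lebesgue_on {0..T}. norm (u t) \<le> R)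
                      \<and> is_solution T \<tau> F0 F1 \<phi> u x \<longrightarrow> W1inf_bounded_by T x C)"
proof -
  obtain L0 L1 where L0: "L0-lipschitz_on UNIV (\<lambda>(x, v). F0 x v)"
    and L1: "L1-lipschitz_on UNIV (\<lambda>(x, v). F1 x v)"
    using assms(3,4) by blast
  show ?thesis
    using is_solution_exists_unique[OF assms(1,2) L0 L1 assms(7)]
      is_solution_W1inf_bounded[OF assms(1,2) L0 L1 assms(7)] by blast
qed

end
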